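(* Let $R$ be a ring. Let $P$ be a polygon divided into subpolygons $P^1$ and $P^2$ by the dissection $\{(t,v),(v,t)\}$; let $V^\alpha$ be the vertex set of $P^\alpha$ and $U^\alpha=V^\alpha\setminus\{t,v\}$. Let $D^2$ be a dissection of $P^2$ and $D=\{(t,v),(v,t)\}\,\dot\cup\,D^2$. Let $c:\operatorname{diag}P\to R$ be a map with $c_{rs}\in R^*$ for all $(r,s)\in D$. Then for $i\in U^1$ and $k\in U^2$, \[ \sum_{p\in\mathscr{P}(D,i,k)}c_p=c_{it}c_{vt}^{-1}\sum_{q\in\mathscr{P}(D^2,v,k)}c_q+c_{iv}c_{tv}^{-1}\sum_{q\in\mathscr{P}(D^2,t,k)}c_q, \] and for $i\in U^2$ and $k\in U^1$, \[ \sum_{p\in\mathscr{P}(D,i,k)}c_p=\Big(\sum_{q\in\mathscr{P}(D^2,i,t)}c_q\Big)c_{vt}^{-1}c_{vk}+\Big(\sum_{q\in\mathscr{P}(D^2,i,v)}c_q\Big)c_{tv}^{-1}c_{tk}. \] Here $\mathscr{P}(D^2,\cdot,\cdot)$ refers to $T$-paths in the polygon $P^2$ with respect to $D^2$.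
   Context: $R^*$ denotes the invertible elements of $R$. A polygon is a finite set of at least three vertices with a cyclic ordering, thought of as a convex polygon in the plane; a subpolygon is a subset of at least three vertices with induced cyclic ordering. $\operatorname{diag}P$ is the set of ordered pairs of distinct vertices; internal diagonals are those whose endpoints are not neighbours. $(i,k)$ and $(j,\ell)$ cross if $i,j,k,\ell$ are pairwise distinct with $i<j<k<\ell$ or $i<\ell<k<j$ cyclically. A dissection is a set of internal diagonals closed under reversal with no two crossing; the pair $\{(t,v),(v,t)\}$ divides $P$ into the subpolygons $P^1,P^2$ whose vertex sets are the vertices on either side of $(t,v)$ together with $t,v$. Write $c_{ik}=c(i,k)$. For a polygon $Q$ with dissection $D$, a sequence $(p_1,\ldots,p_\pi)$ of vertices of $Q$ is a $T$-path from $p_1$ to $p_\pi$ with respect to $D$ if: $p_1\ne p_\pi$; the sets $\{p_\alpha,p_{\alpha+1}\}$ ($1\le\alpha<\pi$) are pairwise different 2-element sets; no $(p_\alpha,p_{\alpha+1})$ crosses a diagonal of $D$; each $(p_{2\alpha},p_{2\alpha+1})$ is in $D$ and crosses $(p_1,p_\pi)$, with the crossing points progressing monotonically from $p_1$ to $p_\pi$. $\mathscr{P}(D,i,k)$ is the set of $T$-paths from $i$ to $k$ with respect to $D$, and $c_p=c_{p_1p_2}c_{p_3p_2}^{-1}c_{p_3p_4}\cdots c_{p_{\pi-1}p_{\pi-2}}^{-1}c_{p_{\pi-1}p_\pi}$. *)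

theory Defs
  imports Main
begin

(* Vertices are elements of a linearly ordered type; a polygon is a finite set of
   at least three vertices, with the cyclic ordering induced by the linear order.
   Subpolygons (subsets) then automatically carry the induced cyclic ordering. *)

definition cyc3 :: "'v::linorder \<Rightarrow> 'v \<Rightarrow> 'v \<Rightarrow> bool" where
  "cyc3 a b c \<longleftrightarrow> (a < b \<and> b < c) \<or> (b < c \<and> c < a) \<or> (c < a \<and> a < b)"

definition cyc4 :: "'v::linorder \<Rightarrow> 'v \<Rightarrow> 'v \<Rightarrow> 'v \<Rightarrow> bool" where
  "cyc4 a b c d \<longleftrightarrow> cyc3 a b c \<and> cyc3 a c d"

definition polygon :: "'v::linorder set \<Rightarrow> bool" where
  "polygon P \<longleftrightarrow> finite P \<and> card P \<ge> 3"

definition diag :: "'v::linorder set \<Rightarrow> ('v \<times> 'v) set" where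
  "diag P = {(i, j). i \<in> P \<and> j \<in> P \<and> i \<noteq> j}"

definition neighbours :: "'v::linorder set \<Rightarrow> 'v \<Rightarrow> 'v \<Rightarrow> bool" where
  "neighbours P i j \<longleftrightarrow> i \<in> P \<and> j \<in> P \<and> i \<noteq> j \<and>
     ((\<forall>w\<in>P. \<not> cyc3 i w j) \<or> (\<forall>w\<in>P. \<not> cyc3 j w i))"

definition internal_diag :: "'v::linorder set \<Rightarrow> ('v \<times> 'v) set" where
  "internal_diag P = {(i, k) \<in> diag P. \<not> neighbours P i k}"

definition crosses :: "'v::linorder \<times> 'v \<Rightarrow> 'v \<times> 'v \<Rightarrow> bool" where
  "crosses d e \<longleftrightarrow> (case d of (i, k) \<Rightarrow> case e of (j, l) \<Rightarrow>
     distinct [i, j, k, l] \<and> (cyc4 i j k l \<or> cyc4 i l k j))"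

definition dissection :: "'v::linorder set \<Rightarrow> ('v \<times> 'v) set \<Rightarrow> bool" where
  "dissection P D \<longleftrightarrow> D \<subseteq> internal_diag P \<and> (\<forall>(i, k)\<in>D. (k, i) \<in> D) \<and>
     (\<forall>d\<in>D. \<forall>e\<in>D. \<not> crosses d e)"

(* vertex sets of the two subpolygons into which the diagonal (t,v) divides P *)
definition side1 :: "'v::linorder set \<Rightarrow> 'v \<Rightarrow> 'v \<Rightarrow> 'v set" where
  "side1 P t v = {w \<in> P. cyc3 t w v} \<union> {t, v}"

definition side2 :: "'v::linorder set \<Rightarrow> 'v \<Rightarrow> 'v \<Rightarrow> 'v set" where
  "side2 P t v = {w \<in> P. cyc3 v w t} \<union> {t, v}"

(* For diagonals d, e both crossing the diagonal ik (and not crossing each other),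
   the crossing point of d with ik lies strictly closer to i than the one of e:
   d and e are different, and the endpoints of e not shared with d lie on the
   same side of d as k. *)
definition cross_before :: "'v::linorder \<times> 'v \<Rightarrow> 'v \<times> 'v \<Rightarrow> 'v \<times> 'v \<Rightarrow> bool" where
  "cross_before ik d e \<longleftrightarrow> {fst e, snd e} \<noteq> {fst d, snd d} \<and>
     (\<forall>x\<in>{fst e, snd e} - {fst d, snd d}.
        cyc3 (fst d) x (snd d) = cyc3 (fst d) (snd ik) (snd d))"

(* T-paths (p_1,...,p_pi), written 0-based: step a joins p!a and p!(a+1);
   the paper's steps (p_{2 alpha}, p_{2 alpha+1}) are the steps with odd a. *)
definition tpath :: "'v::linorder set \<Rightarrow> ('v \<times> 'v) set \<Rightarrow> 'v list \<Rightarrow> bool" where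
  "tpath Q D p \<longleftrightarrow> length p \<ge> 2 \<and> set p \<subseteq> Q \<and> hd p \<noteq> last p \<and>
     (\<forall>a < length p - 1. p ! a \<noteq> p ! (a + 1)) \<and>
     (\<forall>a < length p - 1. \<forall>b < length p - 1. a \<noteq> b \<longrightarrow>
        {p ! a, p ! (a + 1)} \<noteq> {p ! b, p ! (b + 1)}) \<and>
     (\<forall>a < length p - 1. \<forall>d\<in>D. \<not> crosses (p ! a, p ! (a + 1)) d) \<and>
     (\<forall>a < length p - 1. odd a \<longrightarrow>
        (p ! a, p ! (a + 1)) \<in> D \<and> crosses (p ! a, p ! (a + 1)) (hd p, last p)) \<and>
     (\<forall>a b. a < b \<and> b < length p - 1 \<and> odd a \<and> odd b \<longrightarrow>
        cross_before (hd p, last p) (p ! a, p ! (a + 1)) (p ! b, p ! (b + 1)))"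

definition tpaths :: "'v::linorder set \<Rightarrow> ('v \<times> 'v) set \<Rightarrow> 'v \<Rightarrow> 'v \<Rightarrow> 'v list set" where
  "tpaths Q D i k = {p. tpath Q D p \<and> hd p = i \<and> last p = k}"

definition runit :: "'a::{ring, monoid_mult} \<Rightarrow> bool" where
  "runit x \<longleftrightarrow> (\<exists>y. x * y = 1 \<and> y * x = 1)"

definition rinv :: "'a::{ring, monoid_mult} \<Rightarrow> 'a" where
  "rinv x = (THE y. x * y = 1 \<and> y * x = 1)"

definition tweight :: "('v \<Rightarrow> 'v \<Rightarrow> 'a::{ring, monoid_mult}) \<Rightarrow> 'v list \<Rightarrow> 'a" where
  "tweight c p = prod_list (map (\<lambda>a. if even a then c (p ! a) (p ! (a + 1))
                                      else rinv (c (p ! (a + 1)) (p ! a)))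
                                [0..<length p - 1])"

end

theory Submission
  imports Defs
begin

text \<open>A T-path from a vertex \<open>i\<close> of \<open>P\<^sup>1\<close> to a vertex \<open>k\<close> of \<open>P\<^sup>2\<close> must cross the diagonal
  \<open>(t, v)\<close> right away, so its second vertex is an endpoint \<open>a\<close> of it; let \<open>b\<close> be the other one.
  These T-paths correspond bijectively to the T-paths from \<open>b\<close> to \<open>k\<close> in \<open>P\<^sup>2\<close>: a path
  \<open>i, a, b, \<dots>\<close> loses its first two steps, and a path \<open>i, a, y, \<dots>\<close> with \<open>y \<noteq> b\<close> gets its first
  vertex replaced by \<open>b\<close>. Either way the weight changes by the left factor
  \<open>c i a * rinv (c b a)\<close>, which gives the first formula. Reversing paths reverses the order of
  the factors of their weights, so the second formula is the first one for the weights
  \<open>\<lambda>x y. c y x\<close> in the opposite ring.\<close>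

section \<open>T-paths as lists\<close>

text \<open>\<open>steps p\<close> lists the steps \<open>(p ! a, p ! (a + 1))\<close> of a path and \<open>odd_steps p\<close> those with
  odd \<open>a\<close>, which are the paper's diagonal steps \<open>(p\<^sub>2\<^sub>\<alpha>, p\<^sub>2\<^sub>\<alpha>\<^sub>+\<^sub>1)\<close> (1-based there).\<close>

fun steps :: "'v list \<Rightarrow> ('v \<times> 'v) list" where
  "steps (x # y # r) = (x, y) # steps (y # r)"
| "steps _ = []"

fun odd_steps :: "'v list \<Rightarrow> ('v \<times> 'v) list" where
  "odd_steps (x # y # z # r) = (y, z) # odd_steps (z # r)"
| "odd_steps _ = []"

definition uedge :: "'v \<times> 'v \<Rightarrow> 'v set" where
  "uedge e = {fst e, snd e}"

lemma steps_conv_map: "steps p = map (\<lambda>a. (p ! a, p ! (a + 1))) [0..<length p - 1]"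
proof (induction p rule: steps.induct)
  case (1 x y r)
  then show ?case by (simp add: map_upt_Suc del: upt_Suc)
qed auto

lemma odd_steps_conv_map:
  "odd_steps p = map (\<lambda>j. (p ! (2 * j + 1), p ! (2 * j + 2))) [0..<(length p - 1) div 2]"
proof (induction p rule: odd_steps.induct)
  case (1 x y z r)
  have "[0..<Suc (Suc (length r)) div 2] = 0 # map Suc [0..<length r div 2]"
    by (simp add: upt_conv_Cons map_Suc_upt del: upt_Suc)
  with 1 show ?case by simp
qed auto

lemma all_odd_less_iff: "(\<forall>a<(n::nat). odd a \<longrightarrow> P a) \<longleftrightarrow> (\<forall>j<n div 2. P (2 * j + 1))"
proof
  assume "\<forall>a<n. odd a \<longrightarrow> P a"
  then show "\<forall>j<n div 2. P (2 * j + 1)" by auto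
next
  assume H: "\<forall>j<n div 2. P (2 * j + 1)"
  show "\<forall>a<n. odd a \<longrightarrow> P a"
  proof (intro allI impI)
    fix a assume "a < n" "odd a"
    then show "P a" using H[rule_format, of "a div 2"] by (auto elim!: oddE)
  qed
qed

lemma all_odd_pairs_less_iff:
  "(\<forall>a b. a < b \<and> b < (n::nat) \<and> odd a \<and> odd b \<longrightarrow> R a b) \<longleftrightarrow>
   (\<forall>x y. x < y \<and> y < n div 2 \<longrightarrow> R (2 * x + 1) (2 * y + 1))"
proof
  assume "\<forall>a b. a < b \<and> b < n \<and> odd a \<and> odd b \<longrightarrow> R a b"
  then show "\<forall>x y. x < y \<and> y < n div 2 \<longrightarrow> R (2 * x + 1) (2 * y + 1)" by auto
next
  assume H: "\<forall>x y. x < y \<and> y < n div 2 \<longrightarrow> R (2 * x + 1) (2 * y + 1)"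
  show "\<forall>a b. a < b \<and> b < n \<and> odd a \<and> odd b \<longrightarrow> R a b"
  proof (intro allI impI)
    fix a b assume "a < b \<and> b < n \<and> odd a \<and> odd b"
    then show "R a b" using H[rule_format, of "a div 2" "b div 2"] by (auto elim!: oddE)
  qed
qed

lemma sorted_wrt_map_upt_iff:
  "sorted_wrt R (map f [0..<m]) \<longleftrightarrow> (\<forall>x y. x < y \<and> y < m \<longrightarrow> R (f x) (f y))"
  by (auto simp: sorted_wrt_iff_nth_less)

lemma ball_odd_steps_iff:
  "(\<forall>e\<in>set (odd_steps p). P e) \<longleftrightarrow> (\<forall>a<length p - 1. odd a \<longrightarrow> P (p ! a, p ! (a + 1)))"
  unfolding odd_steps_conv_map all_odd_less_iff by (auto simp: add.commute)

lemma steps_endpoints: "e \<in> set (steps p) \<Longrightarrow> fst e \<in> set p \<and> snd e \<in> set p"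
  by (induction p rule: steps.induct) auto

lemma odd_steps_endpoints: "e \<in> set (odd_steps p) \<Longrightarrow> fst e \<in> set (tl p) \<and> snd e \<in> set (tl p)"
  by (induction p rule: odd_steps.induct) auto

lemma set_tl_subset_odd_steps:
  "p \<noteq> [] \<Longrightarrow> set (tl p) \<subseteq> fst ` set (odd_steps p) \<union> snd ` set (odd_steps p) \<union> {last p}"
proof (induction p rule: odd_steps.induct)
  case (1 x y z r)
  then show ?case by (cases r) auto
qed auto

lemma odd_steps_Cons_eq: "odd_steps (x # r) = odd_steps (y # r)"
  by (cases r rule: odd_steps.cases) auto

lemma uedge_notin_steps: "x \<notin> set p \<Longrightarrow> uedge (x, y) \<notin> uedge ` set (steps p)"
  by (force simp: uedge_def doubleton_eq_iff dest: steps_endpoints)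

lemma steps_rev: "steps (rev p) = rev (map prod.swap (steps p))"
  by (rule nth_equalityI) (auto simp: steps_conv_map rev_nth Suc_diff_Suc)

lemma odd_steps_rev:
  assumes "even (length p)"
  shows "odd_steps (rev p) = rev (map prod.swap (odd_steps p))"
proof (cases "p = []")
  case False
  obtain m where n: "length p = 2 * m + 2"
  proof -
    obtain m' where "length p = 2 * m'"
      using assms by (rule evenE)
    with False show ?thesis
      by (intro that[of "m' - 1"]) (cases m', auto)
  qed
  show ?thesis
  proof (rule nth_equalityI)
    show "length (odd_steps (rev p)) = length (rev (map prod.swap (odd_steps p)))"
      by (simp add: odd_steps_conv_map)
    fix j assume "j < length (odd_steps (rev p))"
    then have j: "j < m"
      using n by (simp add: odd_steps_conv_map)
    have "length p - Suc (2 * j + 1) = 2 * (m - 1 - j) + 2"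
      and "length p - Suc (2 * j + 2) = 2 * (m - 1 - j) + 1"
      using j n by simp_all
    then show "odd_steps (rev p) ! j = rev (map prod.swap (odd_steps p)) ! j"
      using j n by (simp add: odd_steps_conv_map rev_nth Suc_diff_Suc)
  qed
qed simp

definition tpath_between :: "'v::linorder set \<Rightarrow> ('v \<times> 'v) set \<Rightarrow> 'v \<Rightarrow> 'v \<Rightarrow> 'v list \<Rightarrow> bool" where
  "tpath_between Q D i k p \<longleftrightarrow> length p \<ge> 2 \<and> set p \<subseteq> Q \<and> hd p = i \<and> last p = k \<and> i \<noteq> k \<and>
     (\<forall>e\<in>set (steps p). fst e \<noteq> snd e \<and> (\<forall>d\<in>D. \<not> crosses e d)) \<and>
     distinct (map uedge (steps p)) \<and>
     (\<forall>e\<in>set (odd_steps p). e \<in> D \<and> crosses e (i, k)) \<and>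
     sorted_wrt (cross_before (i, k)) (odd_steps p)"

lemma tpaths_eq: "tpaths Q D i k = {p. tpath_between Q D i k p}"
proof -
  have "tpath Q D p \<and> hd p = i \<and> last p = k \<longleftrightarrow> tpath_between Q D i k p" for p
    unfolding tpath_def tpath_between_def steps_conv_map odd_steps_conv_map
      all_odd_less_iff all_odd_pairs_less_iff sorted_wrt_map_upt_iff
    by (auto simp: distinct_conv_nth uedge_def)
  then show ?thesis
    unfolding tpaths_def by auto
qed

lemma finite_tpaths_between:
  assumes "finite Q"
  shows "finite {p. tpath_between Q D i k p}"
proof (rule finite_subset)
  show "{p. tpath_between Q D i k p} \<subseteq> {p. set p \<subseteq> Q \<and> length p \<le> card (Pow Q) + 1}"
  proof safe
    fix p assume p: "tpath_between Q D i k p"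
    then have "set p \<subseteq> Q" and distinct: "distinct (map uedge (steps p))"
      unfolding tpath_between_def by auto
    then show "x \<in> Q" if "x \<in> set p" for x
      using that by blast
    have "uedge ` set (steps p) \<subseteq> Pow Q"
      using \<open>set p \<subseteq> Q\<close> by (auto simp: uedge_def dest: steps_endpoints)
    then have "card (uedge ` set (steps p)) \<le> card (Pow Q)"
      using assms by (simp add: card_mono)
    moreover have "card (uedge ` set (steps p)) = length p - 1"
      using distinct_card[OF distinct] by (simp add: steps_conv_map image_image)
    ultimately show "length p \<le> card (Pow Q) + 1"
      by linarith
  qed
  show "finite {p. set p \<subseteq> Q \<and> length p \<le> card (Pow Q) + 1}"
    using finite_lists_length_le[OF assms] by simp
qed

lemma runit_rinv: "runit x \<Longrightarrow> x * rinv x = 1 \<and> rinv x * x = 1"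
proof -
  assume "runit x"
  then obtain y where y: "x * y = 1" "y * x = 1"
    unfolding runit_def by blast
  have "z = y" if "x * z = 1 \<and> z * x = 1" for z
  proof -
    have "z = z * (x * y)" using y by simp
    also have "\<dots> = (z * x) * y" by (simp add: mult.assoc)
    also have "\<dots> = y" using that by simp
    finally show ?thesis .
  qed
  then have "\<exists>!y. x * y = 1 \<and> y * x = 1"
    using y by blast
  then show ?thesis
    unfolding rinv_def by (rule theI')
qed

lemma rinv_unique:
  fixes x y :: "'a::{ring, monoid_mult}"
  assumes "x * y = 1" "y * x = 1"
  shows "rinv x = y"
proof -
  have x: "runit x"
    using assms unfolding runit_def by blast
  have "rinv x = rinv x * (x * y)" using assms by simp
  also have "\<dots> = (rinv x * x) * y" by (simp add: mult.assoc)
  also have "\<dots> = y" using runit_rinv[OF x] by simp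
  finally show ?thesis .
qed

lemma tweight_Cons_Cons_Cons: "tweight c (x # y # z # r) = c x y * rinv (c z y) * tweight c (z # r)"
proof -
  have "[0..<Suc (Suc (length r))] = 0 # 1 # map (\<lambda>a. a + 2) [0..<length r]"
    using map_add_upt[of 2 "length r"] by (simp add: upt_conv_Cons numeral_2_eq_2 del: upt_Suc)
  then show ?thesis
    unfolding tweight_def by (simp add: mult.assoc o_def cong: if_cong del: upt_Suc)
qed

section \<open>Crossing diagonals\<close>

lemma crosses_distinct: "crosses (a, b) (x, y) \<Longrightarrow> distinct [a, b, x, y]"
  unfolding crosses_def by auto

lemma crosses_separates: "crosses (a, b) (x, y) \<Longrightarrow> cyc3 a x b \<noteq> cyc3 a y b"
  unfolding crosses_def cyc4_def cyc3_def by simp (smt (z3) less_trans not_less_iff_gr_or_eq less_asym)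

lemma crosses_sym: "crosses d e \<Longrightarrow> crosses e d"
  unfolding crosses_def cyc4_def cyc3_def
  by (cases d; cases e) (simp, smt (z3) less_trans not_less_iff_gr_or_eq less_asym)

lemma crosses_commute: "crosses d e \<longleftrightarrow> crosses e d"
  using crosses_sym by blast

lemma crosses_swap_left: "crosses (b, a) e \<longleftrightarrow> crosses (a, b) e"
  unfolding crosses_def cyc4_def cyc3_def
  by (cases e) (simp, smt (z3) less_trans not_less_iff_gr_or_eq less_asym)

lemma crosses_swap_right: "crosses d (y, x) \<longleftrightarrow> crosses d (x, y)"
  using crosses_commute crosses_swap_left by metis

lemma crosses_same_side:
  "crosses (a, b) (i, x) \<Longrightarrow> crosses (a, b) (i, y) \<Longrightarrow> cyc3 a x b = cyc3 a y b"
  unfolding crosses_def cyc4_def cyc3_def by simp (smt (z3) less_trans not_less_iff_gr_or_eq less_asym)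

lemma crosses_cyc3_eq: "crosses (a, b) (i, y) \<Longrightarrow> cyc3 a b y = cyc3 a i y"
  unfolding crosses_def cyc4_def cyc3_def by simp (smt (z3) less_trans not_less_iff_gr_or_eq less_asym)

text \<open>If \<open>(a, b)\<close> separates \<open>i\<close> from \<open>x\<close> and \<open>y\<close>, then \<open>i\<close> and \<open>b\<close> lie on the same side of
  the chord \<open>(x, y)\<close>.\<close>

lemma crosses_far_chord_eq:
  assumes "x = a \<or> crosses (a, b) (i, x)" "y = a \<or> crosses (a, b) (i, y)" "crosses (a, b) (i, k)"
  shows "crosses (x, y) (i, k) \<longleftrightarrow> crosses (x, y) (b, k)"
  using assms unfolding crosses_def cyc4_def cyc3_def
  by simp (smt (z3) less_trans not_less_iff_gr_or_eq less_asym)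

lemma not_crosses_near_chord:
  assumes "x = a \<or> x = b \<or> crosses (a, b) (i, x)" "y = a \<or> y = b \<or> crosses (a, b) (i, y)"
  shows "\<not> crosses (i, a) (x, y)"
  using assms unfolding crosses_def cyc4_def cyc3_def
  by simp (smt (z3) less_trans not_less_iff_gr_or_eq less_asym)

lemma cross_before_snd_only: "cross_before (x, k) = cross_before (y, k)"
  unfolding cross_before_def[abs_def] by simp

lemma cross_before_Pair_iff:
  "cross_before ik (d1, d2) (e1, e2) \<longleftrightarrow> \<not> ((e1 = d1 \<and> e2 = d2) \<or> (e1 = d2 \<and> e2 = d1)) \<and>
     (e1 \<noteq> d1 \<and> e1 \<noteq> d2 \<longrightarrow> cyc3 d1 e1 d2 = cyc3 d1 (snd ik) d2) \<and>
     (e2 \<noteq> d1 \<and> e2 \<noteq> d2 \<longrightarrow> cyc3 d1 e2 d2 = cyc3 d1 (snd ik) d2)"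
  unfolding cross_before_def by (auto simp: doubleton_eq_iff)

lemma cross_before_swap:
  fixes d1 d2 e1 e2 i k :: "'v::linorder"
  assumes "crosses (d1, d2) (i, k)" "crosses (e1, e2) (i, k)" "\<not> crosses (d1, d2) (e1, e2)"
    and "cross_before (i, k) (d1, d2) (e1, e2)"
  shows "cross_before (k, i) (e2, e1) (d2, d1)"
  using assms unfolding crosses_def cross_before_Pair_iff cyc4_def cyc3_def
  by simp (smt (z3) less_trans not_less_iff_gr_or_eq less_asym)

lemma crosses_across_diagonal: "cyc3 t i v \<Longrightarrow> cyc3 v x t \<Longrightarrow> crosses (t, v) (i, x)"
  unfolding crosses_def cyc4_def cyc3_def by simp (smt (z3) less_trans not_less_iff_gr_or_eq less_asym)

lemma cyc3_not_reverse: "cyc3 a b c \<Longrightarrow> \<not> cyc3 c b a \<and> b \<noteq> a \<and> b \<noteq> c"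
  unfolding cyc3_def by (smt (z3) less_trans not_less_iff_gr_or_eq less_asym)

lemma tpath_between_ConsE:
  assumes "tpath_between Q D i k p"
  obtains x r where "p = i # x # r"
  using assms unfolding tpath_between_def by (cases p; cases "tl p") auto

lemma later_vertex_side:
  assumes "sorted_wrt (cross_before ik) (odd_steps (x # y # z # r))" "last (z # r) = snd ik"
    and "u \<in> set r" "u \<notin> {snd ik, y, z}"
  shows "cyc3 y u z = cyc3 y (snd ik) z"
proof -
  have "u \<in> fst ` set (odd_steps (z # r)) \<union> snd ` set (odd_steps (z # r))"
    using set_tl_subset_odd_steps[of "z # r"] assms(2-4) by auto
  then obtain e where e: "e \<in> set (odd_steps (z # r))" "u = fst e \<or> u = snd e"
    by auto
  have "cross_before ik (y, z) e"
    using assms(1) e(1) by simp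
  then show ?thesis
    unfolding cross_before_def using e(2) assms(4) by auto
qed

lemma start_not_revisited:
  assumes "sorted_wrt (cross_before ik) (odd_steps (x # w # u # r))" "last (u # r) = snd ik"
    and "crosses (w, u) (x, snd ik)"
  shows "x \<notin> set (w # u # r)"
proof -
  have "x \<notin> {snd ik, w, u}"
    using crosses_distinct[OF assms(3)] by auto
  moreover have "cyc3 w x u \<noteq> cyc3 w (snd ik) u"
    using crosses_separates[OF assms(3)] .
  ultimately show ?thesis
    using later_vertex_side[OF assms(1,2), of x] by auto
qed

lemma tpath_between_start_notin:
  assumes p: "tpath_between Q D x k (x # r)"
  shows "x \<notin> set r"
proof -
  obtain w r1 where r: "r = w # r1"
    using p unfolding tpath_between_def by (cases r) auto
  show ?thesis
  proof (cases r1)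
    case Nil
    then show ?thesis using p r unfolding tpath_between_def by auto
  next
    case (Cons u r')
    have "sorted_wrt (cross_before (x, k)) (odd_steps (x # w # u # r'))"
      "last (u # r') = snd (x, k)" "crosses (w, u) (x, snd (x, k))"
      using p unfolding r Cons tpath_between_def by auto
    then show ?thesis
      using start_not_revisited r Cons by blast
  qed
qed

lemma tpath_between_even_length:
  assumes p: "tpath_between Q D i k p"
  shows "even (length p)"
proof (rule ccontr)
  assume "odd (length p)"
  moreover have "length p \<ge> 2"
    using p unfolding tpath_between_def by simp
  ultimately obtain m where n: "length p = 2 * m + 3"
  proof -
    obtain m' where "length p = 2 * m' + 1"
      using \<open>odd (length p)\<close> by (rule oddE)
    with \<open>length p \<ge> 2\<close> show ?thesis
      by (intro that[of "m' - 1"]) auto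
  qed
  then have "(p ! (2 * m + 1), p ! (2 * m + 2)) \<in> set (odd_steps p)"
    by (auto simp: odd_steps_conv_map)
  moreover have "p ! (2 * m + 2) = k"
  proof -
    have "p \<noteq> []"
      using n by auto
    then show ?thesis
      using p n unfolding tpath_between_def by (simp add: last_conv_nth)
  qed
  ultimately have "crosses (p ! (2 * m + 1), k) (i, k)"
    using p unfolding tpath_between_def by auto
  then show False
    by (auto dest: crosses_distinct)
qed

section \<open>Splitting off a separating diagonal\<close>

text \<open>The diagonal is oriented so that the locale applies to both \<open>(t, v)\<close> and \<open>(v, t)\<close>.\<close>

locale separating_diagonal =
  fixes Q S :: "'v::linorder set" and D D2 :: "('v \<times> 'v) set" and a b i k :: 'v
  assumes S_subset_Q: "S \<subseteq> Q" and a_in_S: "a \<in> S" and b_in_S: "b \<in> S"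
    and i_in_Q: "i \<in> Q" and i_notin_S: "i \<notin> S"
    and k_in_S: "k \<in> S" and k_neq_a: "k \<noteq> a" and k_neq_b: "k \<noteq> b"
    and D_eq: "D = {(a, b), (b, a)} \<union> D2"
    and ab_notin_D2: "(a, b) \<notin> D2" and ba_notin_D2: "(b, a) \<notin> D2"
    and D2_subset: "D2 \<subseteq> S \<times> S"
    and separates: "\<And>x. x \<in> S \<Longrightarrow> x \<noteq> a \<Longrightarrow> x \<noteq> b \<Longrightarrow> crosses (a, b) (i, x)"
begin

lemma swap: "separating_diagonal Q S D D2 b a i k"
proof
  show "D = {(b, a), (a, b)} \<union> D2"
    using D_eq by auto
  show "crosses (b, a) (i, x)" if "x \<in> S" "x \<noteq> b" "x \<noteq> a" for x
    using separates that crosses_swap_left by blast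
qed (simp_all add: S_subset_Q a_in_S b_in_S i_in_Q i_notin_S k_in_S k_neq_a k_neq_b
      ab_notin_D2 ba_notin_D2 D2_subset)

lemma ab_crosses_ik: "crosses (a, b) (i, k)"
  using separates k_in_S k_neq_a k_neq_b by blast

lemma a_neq_b: "a \<noteq> b"
  using crosses_distinct[OF ab_crosses_ik] by simp

lemma D_subset: "D \<subseteq> S \<times> S"
  using D_eq D2_subset a_in_S b_in_S by auto

lemma D_symmetric: "\<forall>(x, y)\<in>D2. (y, x) \<in> D2 \<Longrightarrow> \<forall>(x, y)\<in>D. (y, x) \<in> D"
  using D_eq by auto

lemma S_not_crosses_ab:
  assumes "x \<in> S" "y \<in> S"
  shows "\<not> crosses (x, y) (a, b)"
proof
  assume cr: "crosses (x, y) (a, b)"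
  then have "x \<noteq> a" "x \<noteq> b" "y \<noteq> a" "y \<noteq> b"
    using crosses_distinct by auto
  then have "cyc3 a x b = cyc3 a y b"
    using crosses_same_side separates assms by blast
  moreover have "cyc3 a x b \<noteq> cyc3 a y b"
    using crosses_separates cr crosses_commute by metis
  ultimately show False by simp
qed

lemma ab_noncrossing:
  assumes "d \<in> D"
  shows "\<not> crosses (a, b) d \<and> \<not> crosses (b, a) d"
proof (cases "d \<in> D2")
  case True
  then obtain x y where "d = (x, y)" "x \<in> S" "y \<in> S"
    using D2_subset by auto
  then show ?thesis
    using S_not_crosses_ab crosses_commute crosses_swap_left by metis
next
  case False
  then have "d = (a, b) \<or> d = (b, a)"
    using assms D_eq by auto
  then show ?thesis
    using crosses_distinct by auto
qed

lemma D_noncrossing: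
  assumes "\<forall>d\<in>D2. \<forall>e\<in>D2. \<not> crosses d e"
  shows "\<forall>d\<in>D. \<forall>e\<in>D. \<not> crosses d e"
proof (intro ballI)
  fix d e assume "d \<in> D" "e \<in> D"
  then consider "d \<in> {(a, b), (b, a)}" | "e \<in> {(a, b), (b, a)}" | "d \<in> D2" "e \<in> D2"
    using D_eq by blast
  then show "\<not> crosses d e"
  proof cases
    case 1
    then show ?thesis using ab_noncrossing[OF \<open>e \<in> D\<close>] by auto
  next
    case 2
    then show ?thesis using ab_noncrossing[OF \<open>d \<in> D\<close>] crosses_commute[of d e] by auto
  next
    case 3
    then show ?thesis using assms by blast
  qed
qed

lemma ia_noncrossing:
  assumes "d \<in> D"
  shows "\<not> crosses (i, a) d"
proof -
  obtain x y where "d = (x, y)" "x \<in> S" "y \<in> S"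
    using assms D_subset by auto
  then show ?thesis
    using separates not_crosses_near_chord by metis
qed

lemma noncrossing_D_iff_D2:
  assumes "x \<in> S" "y \<in> S"
  shows "(\<forall>d\<in>D. \<not> crosses (x, y) d) \<longleftrightarrow> (\<forall>d\<in>D2. \<not> crosses (x, y) d)"
  using D_eq S_not_crosses_ab[OF assms] crosses_swap_right by auto

lemma steps_noncrossing_D_iff_D2:
  assumes "set p \<subseteq> S"
  shows "(\<forall>e\<in>set (steps p). fst e \<noteq> snd e \<and> (\<forall>d\<in>D. \<not> crosses e d)) \<longleftrightarrow>
         (\<forall>e\<in>set (steps p). fst e \<noteq> snd e \<and> (\<forall>d\<in>D2. \<not> crosses e d))"
proof -
  have "(\<forall>d\<in>D. \<not> crosses e d) \<longleftrightarrow> (\<forall>d\<in>D2. \<not> crosses e d)" if "e \<in> set (steps p)" for e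
    using noncrossing_D_iff_D2[of "fst e" "snd e"] steps_endpoints[OF that] assms by auto
  then show ?thesis by blast
qed

lemma odd_step_D_iff_D2:
  assumes "fst e \<noteq> b" "snd e \<noteq> b"
  shows "e \<in> D \<and> crosses e (i, k) \<longleftrightarrow> e \<in> D2 \<and> crosses e (b, k)"
proof -
  have "e \<in> D \<longleftrightarrow> e \<in> D2"
    using assms D_eq by auto
  moreover have "crosses e (i, k) \<longleftrightarrow> crosses e (b, k)" if "e \<in> D2"
  proof -
    have "fst e \<in> S" "snd e \<in> S"
      using that D2_subset by auto
    then show ?thesis
      using crosses_far_chord_eq[of "fst e" a b i "snd e" k] separates assms ab_crosses_ik
      by (cases e) auto
  qed
  ultimately show ?thesis by blast
qed

lemma odd_steps_D_iff_D2:
  assumes "b \<notin> set (tl p)"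
  shows "(\<forall>e\<in>set (odd_steps p). e \<in> D \<and> crosses e (i, k)) \<longleftrightarrow>
         (\<forall>e\<in>set (odd_steps p). e \<in> D2 \<and> crosses e (b, k))"
proof -
  have "fst e \<noteq> b \<and> snd e \<noteq> b" if "e \<in> set (odd_steps p)" for e
    using odd_steps_endpoints[OF that] assms by auto
  then show ?thesis
    using odd_step_D_iff_D2 by blast
qed

lemma far_side_eq: "x \<in> S \<Longrightarrow> x \<noteq> a \<Longrightarrow> x \<noteq> b \<Longrightarrow> cyc3 a x b = cyc3 a k b"
  using separates crosses_same_side ab_crosses_ik by blast

lemma cross_before_ab:
  assumes "e \<in> D2"
  shows "cross_before (i, k) (a, b) e"
proof -
  have "fst e \<in> S" "snd e \<in> S" "{fst e, snd e} \<noteq> {a, b}"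
    using assms D2_subset ab_notin_D2 ba_notin_D2 by (auto simp: doubleton_eq_iff)
  then show ?thesis
    unfolding cross_before_def using far_side_eq by auto
qed

lemma tpath_tail_in_S:
  assumes "tpath_between Q D i k p"
  shows "set (tl p) \<subseteq> S"
proof -
  have "p \<noteq> []" "last p = k" "set (odd_steps p) \<subseteq> S \<times> S"
    using assms D_subset unfolding tpath_between_def by auto
  moreover from this(3) have "fst ` set (odd_steps p) \<union> snd ` set (odd_steps p) \<subseteq> S"
    by auto
  ultimately show ?thesis
    using set_tl_subset_odd_steps[of p] k_in_S by blast
qed

lemma second_vertex:
  assumes p: "tpath_between Q D i k p"
  shows "p ! 1 = a \<or> p ! 1 = b"
proof -
  obtain x r where p_eq: "p = i # x # r"
    using p unfolding tpath_between_def by (cases p; cases "tl p") auto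
  have ab_in_D: "(a, b) \<in> D"
    using D_eq by simp
  have "\<not> crosses (i, x) (a, b)"
    using p ab_in_D unfolding p_eq tpath_between_def by auto
  moreover have "x \<in> S"
  proof (cases r)
    case Nil
    then show ?thesis using p k_in_S unfolding p_eq tpath_between_def by simp
  next
    case (Cons y r')
    then have "(x, y) \<in> D"
      using p unfolding p_eq tpath_between_def by auto
    then show ?thesis using D_subset by auto
  qed
  ultimately show ?thesis
    using separates crosses_commute p_eq by fastforce
qed

lemma tpath_restrict_drop_ab:
  assumes p: "tpath_between Q D i k (i # a # b # r)"
  shows "tpath_between S D2 b k (b # r) \<and> (b # r) ! 1 \<noteq> a"
proof -
  have r_ne: "r \<noteq> []"
    using p k_neq_b unfolding tpath_between_def by auto
  have in_S: "set (b # r) \<subseteq> S"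
    using tpath_tail_in_S[OF p] by simp
  have steps_ok: "\<forall>e\<in>set (steps (b # r)). fst e \<noteq> snd e \<and> (\<forall>d\<in>D. \<not> crosses e d)"
    and distinct: "distinct (map uedge (steps (b # r)))"
    and ab_new: "uedge (a, b) \<notin> uedge ` set (steps (b # r))"
    and odd_ok: "\<forall>e\<in>set (odd_steps (b # r)). e \<in> D \<and> crosses e (i, k)"
    and sorted: "sorted_wrt (cross_before (b, k)) (odd_steps (b # r))"
    and last: "last (b # r) = k"
    using p r_ne cross_before_snd_only[of i k b] unfolding tpath_between_def by auto
  have "b \<notin> set r"
  proof (cases "tl r")
    case Nil
    then show ?thesis using r_ne last k_neq_b by (cases r) auto
  next
    case (Cons u r')
    then obtain w where r_eq: "r = w # u # r'"
      using r_ne by (cases r) auto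
    have "w \<noteq> b"
      using steps_ok r_eq by auto
    moreover have "u \<noteq> b"
      using distinct r_eq by (auto simp: uedge_def insert_commute)
    ultimately have "crosses (w, u) (b, k)"
      using odd_ok odd_step_D_iff_D2[of "(w, u)"] r_eq by auto
    then show ?thesis
      using start_not_revisited[of "(b, k)"] sorted last r_eq by simp
  qed
  then have "\<forall>e\<in>set (odd_steps (b # r)). e \<in> D2 \<and> crosses e (b, k)"
    using odd_ok odd_steps_D_iff_D2[of "b # r"] by simp
  moreover have "(b # r) ! 1 \<noteq> a"
    using ab_new r_ne by (cases r) (auto simp: uedge_def insert_commute)
  ultimately show ?thesis
    using in_S steps_ok steps_noncrossing_D_iff_D2[OF in_S] distinct sorted last r_ne k_neq_b
    unfolding tpath_between_def by (auto simp: Suc_le_eq)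
qed

lemma tpath_restrict_replace_i:
  assumes p: "tpath_between Q D i k (i # a # y # r)" and y_neq_b: "y \<noteq> b"
  shows "tpath_between S D2 b k (b # a # y # r)"
proof -
  have in_S: "set (a # y # r) \<subseteq> S"
    using tpath_tail_in_S[OF p] by simp
  have ay: "crosses (a, y) (i, k)" and "y \<noteq> a"
    and steps_ok: "\<forall>e\<in>set (steps (a # y # r)). fst e \<noteq> snd e \<and> (\<forall>d\<in>D. \<not> crosses e d)"
    and distinct: "distinct (map uedge (steps (a # y # r)))"
    and odd_ok: "\<forall>e\<in>set (odd_steps (i # a # y # r)). e \<in> D \<and> crosses e (i, k)"
    and sorted: "sorted_wrt (cross_before (i, k)) (odd_steps (i # a # y # r))"
    and last: "last (y # r) = k"
    using p unfolding tpath_between_def by auto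
  have "b \<notin> set r"
  proof
    assume "b \<in> set r"
    then have "cyc3 a b y = cyc3 a k y"
      using later_vertex_side[OF sorted, of b] last k_neq_b a_neq_b y_neq_b by auto
    moreover have "cyc3 a b y = cyc3 a i y"
      using crosses_cyc3_eq[OF separates] in_S \<open>y \<noteq> a\<close> y_neq_b by simp
    moreover have "cyc3 a i y \<noteq> cyc3 a k y"
      using crosses_separates[OF ay] .
    ultimately show False by simp
  qed
  then have b_notin: "b \<notin> set (a # y # r)"
    using a_neq_b y_neq_b by auto
  have "\<forall>e\<in>set (steps (b # a # y # r)). fst e \<noteq> snd e \<and> (\<forall>d\<in>D2. \<not> crosses e d)"
    using steps_ok steps_noncrossing_D_iff_D2[OF in_S] ab_noncrossing D_eq a_neq_b by auto
  moreover have "distinct (map uedge (steps (b # a # y # r)))"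
    using distinct uedge_notin_steps[OF b_notin, of a] by simp
  moreover have "\<forall>e\<in>set (odd_steps (b # a # y # r)). e \<in> D2 \<and> crosses e (b, k)"
    using odd_ok odd_steps_D_iff_D2[of "b # a # y # r"] odd_steps_Cons_eq[of b _ i] b_notin
    by simp
  moreover have "sorted_wrt (cross_before (b, k)) (odd_steps (b # a # y # r))"
    using sorted odd_steps_Cons_eq[of b _ i] cross_before_snd_only[of i k b] by simp
  ultimately show ?thesis
    using in_S b_in_S last k_neq_b unfolding tpath_between_def by simp
qed

lemma uedge_ab_notin_steps:
  assumes q: "tpath_between S D2 b k (b # w # r)" and "w \<noteq> a"
  shows "uedge (a, b) \<notin> uedge ` set (steps (b # w # r))"
proof -
  have "uedge (a, b) \<notin> uedge ` set (steps (w # r))"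
    using uedge_notin_steps[OF tpath_between_start_notin[OF q], of a]
    by (simp add: uedge_def insert_commute)
  moreover have "uedge (a, b) \<noteq> uedge (b, w)"
    using \<open>w \<noteq> a\<close> a_neq_b by (auto simp: uedge_def doubleton_eq_iff)
  ultimately show ?thesis by simp
qed

lemma tpath_extend_prepend_ia:
  assumes q: "tpath_between S D2 b k q" and q1: "q ! 1 \<noteq> a"
  shows "tpath_between Q D i k (i # a # q)"
proof -
  obtain w r where q_eq: "q = b # w # r"
    using tpath_between_ConsE[OF q] .
  have b_notin: "b \<notin> set (tl q)"
    using tpath_between_start_notin[OF q[unfolded q_eq]] q_eq by simp
  have in_S: "set q \<subseteq> S"
    and steps_ok: "\<forall>e\<in>set (steps q). fst e \<noteq> snd e \<and> (\<forall>d\<in>D2. \<not> crosses e d)"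
    and distinct: "distinct (map uedge (steps q))"
    and odd_ok: "\<forall>e\<in>set (odd_steps q). e \<in> D2 \<and> crosses e (b, k)"
    and sorted: "sorted_wrt (cross_before (b, k)) (odd_steps q)"
    and last: "last q = k"
    using q unfolding tpath_between_def by auto
  have steps_eq: "steps (i # a # q) = (i, a) # (a, b) # steps q"
    and odd_eq: "odd_steps (i # a # q) = (a, b) # odd_steps q"
    using q_eq by simp_all
  have "\<forall>e\<in>set (steps (i # a # q)). fst e \<noteq> snd e \<and> (\<forall>d\<in>D. \<not> crosses e d)"
    using steps_eq steps_ok steps_noncrossing_D_iff_D2[OF in_S] ia_noncrossing ab_noncrossing
      i_notin_S a_in_S a_neq_b by auto
  moreover have "distinct (map uedge (steps (i # a # q)))"
  proof -
    have "uedge (i, a) \<notin> uedge ` set (steps q)"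
      using uedge_notin_steps[of i q a] in_S i_notin_S by blast
    moreover have "uedge (i, a) \<noteq> uedge (a, b)"
      using i_notin_S a_in_S b_in_S by (auto simp: uedge_def doubleton_eq_iff)
    ultimately show ?thesis
      using steps_eq distinct uedge_ab_notin_steps[OF q[unfolded q_eq]] q1 q_eq by simp
  qed
  moreover have "\<forall>e\<in>set (odd_steps (i # a # q)). e \<in> D \<and> crosses e (i, k)"
    using odd_eq odd_ok odd_steps_D_iff_D2[of q] b_notin D_eq ab_crosses_ik by simp
  moreover have "sorted_wrt (cross_before (i, k)) (odd_steps (i # a # q))"
    using odd_eq sorted odd_ok cross_before_ab cross_before_snd_only[of i k b] by simp
  ultimately show ?thesis
    using in_S i_in_Q S_subset_Q a_in_S i_notin_S k_in_S last q_eq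
    unfolding tpath_between_def by auto
qed

lemma tpath_extend_replace_b:
  assumes q: "tpath_between S D2 b k (b # a # r)"
  shows "tpath_between Q D i k (i # a # r)"
proof -
  have b_notin: "b \<notin> set (a # r)"
    using tpath_between_start_notin q by blast
  have in_S: "set (a # r) \<subseteq> S"
    and steps_ok: "\<forall>e\<in>set (steps (a # r)). fst e \<noteq> snd e \<and> (\<forall>d\<in>D2. \<not> crosses e d)"
    and distinct: "distinct (map uedge (steps (a # r)))"
    and odd_ok: "\<forall>e\<in>set (odd_steps (b # a # r)). e \<in> D2 \<and> crosses e (b, k)"
    and sorted: "sorted_wrt (cross_before (b, k)) (odd_steps (b # a # r))"
    and last: "last (a # r) = k"
    using q unfolding tpath_between_def by auto
  have odd_eq: "odd_steps (i # a # r) = odd_steps (b # a # r)"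
    by (rule odd_steps_Cons_eq)
  have "\<forall>e\<in>set (steps (i # a # r)). fst e \<noteq> snd e \<and> (\<forall>d\<in>D. \<not> crosses e d)"
    using steps_ok steps_noncrossing_D_iff_D2[OF in_S] ia_noncrossing i_notin_S in_S by auto
  moreover have "distinct (map uedge (steps (i # a # r)))"
    using distinct uedge_notin_steps[of i "a # r" a] in_S i_notin_S by auto
  moreover have "\<forall>e\<in>set (odd_steps (i # a # r)). e \<in> D \<and> crosses e (i, k)"
    using odd_ok odd_steps_D_iff_D2[of "i # a # r"] b_notin odd_eq by simp
  moreover have "sorted_wrt (cross_before (i, k)) (odd_steps (i # a # r))"
    using sorted odd_eq cross_before_snd_only[of i k b] by simp
  ultimately show ?thesis
    using in_S i_in_Q S_subset_Q i_notin_S k_in_S last k_neq_a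
    unfolding tpath_between_def by (cases r) auto
qed

definition reroot :: "'v list \<Rightarrow> 'v list" where
  "reroot q = (if q ! 1 = a then i # tl q else i # a # q)"

definition unroot :: "'v list \<Rightarrow> 'v list" where
  "unroot p = (if p ! 2 = b then drop 2 p else b # tl p)"

lemma reroot_tpath:
  assumes q: "tpath_between S D2 b k q"
  shows "tpath_between Q D i k (reroot q) \<and> reroot q ! 1 = a \<and> unroot (reroot q) = q"
proof -
  obtain x r where q_eq: "q = b # x # r"
    using tpath_between_ConsE[OF q] .
  show ?thesis
  proof (cases "x = a")
    case True
    then obtain y r' where "r = y # r'"
      using q q_eq k_neq_a unfolding tpath_between_def by (cases r) auto
    moreover have "y \<noteq> b"
      using tpath_between_start_notin[OF q[unfolded q_eq]] calculation by auto
    ultimately show ?thesis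
      using tpath_extend_replace_b q q_eq True unfolding reroot_def unroot_def by simp
  next
    case False
    then show ?thesis
      using tpath_extend_prepend_ia q q_eq unfolding reroot_def unroot_def by simp
  qed
qed

lemma unroot_tpath:
  assumes p: "tpath_between Q D i k p" and p1: "p ! 1 = a"
  shows "tpath_between S D2 b k (unroot p) \<and> reroot (unroot p) = p"
proof -
  obtain x r0 where "p = i # x # r0"
    using tpath_between_ConsE[OF p] .
  moreover obtain y r where "r0 = y # r"
    using p p1 k_neq_a calculation unfolding tpath_between_def by (cases r0) auto
  ultimately have p_eq: "p = i # a # y # r"
    using p1 by simp
  show ?thesis
  proof (cases "y = b")
    case True
    then show ?thesis
      using tpath_restrict_drop_ab p p_eq unfolding reroot_def unroot_def by simp
  next
    case False
    then show ?thesis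
      using tpath_restrict_replace_i p p_eq unfolding reroot_def unroot_def by simp
  qed
qed

lemma bij_betw_reroot:
  "bij_betw reroot {q. tpath_between S D2 b k q} {p. tpath_between Q D i k p \<and> p ! 1 = a}"
  by (rule bij_betw_byWitness[where f' = unroot]) (use reroot_tpath unroot_tpath in auto)

lemma tweight_reroot:
  assumes "runit (c b a)" and q: "tpath_between S D2 b k q"
  shows "tweight c (reroot q) = c i a * rinv (c b a) * tweight c q"
proof -
  obtain x r where q_eq: "q = b # x # r"
    using tpath_between_ConsE[OF q] .
  show ?thesis
  proof (cases "x = a")
    case True
    then obtain y r' where r_eq: "r = y # r'"
      using q q_eq k_neq_a unfolding tpath_between_def by (cases r) auto
    have "c i a * rinv (c b a) * tweight c q
        = c i a * (rinv (c b a) * c b a) * rinv (c y a) * tweight c (y # r')"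
      using q_eq r_eq True by (simp add: tweight_Cons_Cons_Cons mult.assoc)
    also have "\<dots> = tweight c (reroot q)"
      using runit_rinv[OF assms(1)] True q_eq r_eq by (simp add: reroot_def tweight_Cons_Cons_Cons)
    finally show ?thesis ..
  next
    case False
    then show ?thesis
      using q_eq by (simp add: reroot_def tweight_Cons_Cons_Cons)
  qed
qed

lemma sum_tpaths_via_a:
  assumes "runit (c b a)"
  shows "(\<Sum>p | tpath_between Q D i k p \<and> p ! 1 = a. tweight c p)
       = c i a * rinv (c b a) * (\<Sum>q | tpath_between S D2 b k q. tweight c q)"
proof -
  have "(\<Sum>p | tpath_between Q D i k p \<and> p ! 1 = a. tweight c p)
      = (\<Sum>q | tpath_between S D2 b k q. tweight c (reroot q))"
    using sum.reindex_bij_betw[OF bij_betw_reroot, of "tweight c"] by simp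
  also have "\<dots> = (\<Sum>q | tpath_between S D2 b k q. c i a * rinv (c b a) * tweight c q)"
    using tweight_reroot[of c, OF assms] by simp
  finally show ?thesis
    by (simp add: sum_distrib_left)
qed

lemma sum_tpaths:
  assumes "finite Q" and "runit (c b a)" and "runit (c a b)"
  shows "(\<Sum>p | tpath_between Q D i k p. tweight c p)
       = c i a * rinv (c b a) * (\<Sum>q | tpath_between S D2 b k q. tweight c q)
       + c i b * rinv (c a b) * (\<Sum>q | tpath_between S D2 a k q. tweight c q)"
proof -
  interpret swapped: separating_diagonal Q S D D2 b a i k
    by (rule swap)
  have split: "{p. tpath_between Q D i k p}
      = {p. tpath_between Q D i k p \<and> p ! 1 = a} \<union> {p. tpath_between Q D i k p \<and> p ! 1 = b}"
    using second_vertex by auto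
  have "(\<Sum>p | tpath_between Q D i k p. tweight c p)
      = (\<Sum>p | tpath_between Q D i k p \<and> p ! 1 = a. tweight c p)
      + (\<Sum>p | tpath_between Q D i k p \<and> p ! 1 = b. tweight c p)"
    by (subst split, rule sum.union_disjoint)
      (use finite_tpaths_between[OF assms(1)] a_neq_b in auto)
  then show ?thesis
    using sum_tpaths_via_a[of c, OF assms(2)] swapped.sum_tpaths_via_a[of c, OF assms(3)] by simp
qed

end

section \<open>Reversing T-paths\<close>

lemma sorted_cross_before_rev:
  assumes crossing: "\<forall>e\<in>set ds. e \<in> D \<and> crosses e (i, k)"
    and noncrossing: "\<forall>d\<in>D. \<forall>e\<in>D. \<not> crosses d e"
    and sorted: "sorted_wrt (cross_before (i, k)) ds"
  shows "sorted_wrt (cross_before (k, i)) (rev (map prod.swap ds))"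
proof -
  have "cross_before (k, i) (prod.swap e) (prod.swap d)"
    if "d \<in> set ds" "e \<in> set ds" "cross_before (i, k) d e" for d e
  proof -
    obtain d1 d2 e1 e2 where "d = (d1, d2)" "e = (e1, e2)"
      by (cases d, cases e)
    then show ?thesis
      using cross_before_swap[of d1 d2 i k e1 e2] that crossing noncrossing by simp
  qed
  then have "sorted_wrt (\<lambda>d e. cross_before (k, i) (prod.swap e) (prod.swap d)) ds"
    by (rule sorted_wrt_mono_rel[OF _ sorted])
  then show ?thesis
    by (simp add: sorted_wrt_rev sorted_wrt_map)
qed

lemma tpath_between_rev:
  assumes p: "tpath_between Q D i k p"
    and sym: "\<forall>(x, y)\<in>D. (y, x) \<in> D" and noncrossing: "\<forall>d\<in>D. \<forall>e\<in>D. \<not> crosses d e"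
  shows "tpath_between Q D k i (rev p)"
proof -
  have even: "even (length p)"
    using tpath_between_even_length[OF p] .
  have odd_ok: "\<forall>e\<in>set (odd_steps p). e \<in> D \<and> crosses e (i, k)"
    and sorted: "sorted_wrt (cross_before (i, k)) (odd_steps p)"
    using p unfolding tpath_between_def by auto
  have steps_ok: "\<forall>e\<in>set (steps p). fst e \<noteq> snd e \<and> (\<forall>d\<in>D. \<not> crosses e d)"
    using p unfolding tpath_between_def by auto
  have "\<forall>e\<in>set (steps (rev p)). fst e \<noteq> snd e \<and> (\<forall>d\<in>D. \<not> crosses e d)"
  proof
    fix e assume "e \<in> set (steps (rev p))"
    then obtain x y where "(y, x) \<in> set (steps p)" "e = (x, y)"
      unfolding steps_rev by auto
    then show "fst e \<noteq> snd e \<and> (\<forall>d\<in>D. \<not> crosses e d)"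
      using steps_ok crosses_swap_left[of x y] by fastforce
  qed
  moreover have "distinct (map uedge (steps (rev p)))"
  proof -
    have "map uedge (steps (rev p)) = rev (map uedge (steps p))"
      by (simp add: steps_rev rev_map[symmetric] comp_def uedge_def insert_commute)
    then show ?thesis
      using p unfolding tpath_between_def by simp
  qed
  moreover have "\<forall>e\<in>set (odd_steps (rev p)). e \<in> D \<and> crosses e (k, i)"
  proof
    fix e assume "e \<in> set (odd_steps (rev p))"
    then obtain x y where "(y, x) \<in> set (odd_steps p)" "e = (x, y)"
      unfolding odd_steps_rev[OF even] by auto
    then show "e \<in> D \<and> crosses e (k, i)"
      using odd_ok sym crosses_swap_left[of x y] crosses_swap_right[of _ k i] by fastforce
  qed
  moreover have "sorted_wrt (cross_before (k, i)) (odd_steps (rev p))"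
    using sorted_cross_before_rev[OF odd_ok noncrossing sorted] odd_steps_rev[OF even] by simp
  moreover have "k \<noteq> i"
    using p unfolding tpath_between_def by auto
  ultimately show ?thesis
    using p unfolding tpath_between_def by (simp add: hd_rev last_rev)
qed

lemma sum_tpaths_between_rev:
  assumes "\<forall>(x, y)\<in>D. (y, x) \<in> D" and "\<forall>d\<in>D. \<forall>e\<in>D. \<not> crosses d e"
  shows "(\<Sum>p | tpath_between Q D i k p. f p) = (\<Sum>p | tpath_between Q D k i p. f (rev p))"
proof -
  have "bij_betw rev {p. tpath_between Q D k i p} {p. tpath_between Q D i k p}"
    by (rule bij_betw_byWitness[where f' = rev]) (use tpath_between_rev[OF _ assms] in auto)
  then show ?thesis
    using sum.reindex_bij_betw[of rev _ _ f] by simp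
qed

text \<open>Reversing a path reverses the order of the factors of its weight, so reversed paths
  are weighted in the opposite ring.\<close>

datatype 'a opp = Opp (unopp: 'a)

lemma opp_eq_iff: "x = y \<longleftrightarrow> unopp x = unopp y"
  by (cases x; cases y) auto

instantiation opp :: ("{ring, monoid_mult}") "{ring, monoid_mult}"
begin
definition "0 = Opp 0"
definition "1 = Opp 1"
definition "x + y = Opp (unopp x + unopp y)"
definition "x - y = Opp (unopp x - unopp y)"
definition "- x = Opp (- unopp x)"
definition "x * y = Opp (unopp y * unopp x)"
instance
  by standard (simp_all add: opp_eq_iff zero_opp_def one_opp_def plus_opp_def minus_opp_def
      uminus_opp_def times_opp_def algebra_simps mult.assoc)
end

lemma unopp_simps [simp]:
  "unopp 0 = 0" "unopp 1 = 1" "unopp (x + y) = unopp x + unopp y" "unopp (x * y) = unopp y * unopp x"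
  by (simp_all add: zero_opp_def one_opp_def plus_opp_def times_opp_def)

lemma unopp_sum: "unopp (sum f A) = (\<Sum>x\<in>A. unopp (f x))"
  by (induction A rule: infinite_finite_induct) auto

lemma unopp_prod_list: "unopp (prod_list xs) = prod_list (rev (map unopp xs))"
  by (induction xs) auto

lemma runit_Opp:
  assumes "runit x"
  shows "runit (Opp x)"
proof -
  obtain y where "x * y = 1" "y * x = 1"
    using assms unfolding runit_def by blast
  then have "Opp x * Opp y = 1 \<and> Opp y * Opp x = 1"
    by (simp add: opp_eq_iff)
  then show ?thesis
    unfolding runit_def by blast
qed

lemma rinv_Opp: "runit x \<Longrightarrow> rinv (Opp x) = Opp (rinv x)"
  by (rule rinv_unique) (simp_all add: opp_eq_iff runit_rinv)

lemma tweight_rev: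
  assumes even: "even (length p)" and units: "\<forall>e\<in>set (odd_steps p). runit (c (fst e) (snd e))"
  shows "tweight c (rev p) = unopp (tweight (\<lambda>x y. Opp (c y x)) p)"
proof -
  let ?n = "length p"
  define F where "F a = (if even a then Opp (c (p ! (a + 1)) (p ! a))
                         else rinv (Opp (c (p ! a) (p ! (a + 1)))))" for a
  have rev_upt: "rev (map f [0..<m]) = map (\<lambda>a. f (m - 1 - a)) [0..<m]" for f :: "nat \<Rightarrow> 'b" and m
    by (rule nth_equalityI) (auto simp: rev_nth)
  have "tweight (\<lambda>x y. Opp (c y x)) p = prod_list (map F [0..<?n - 1])"
    unfolding tweight_def F_def by simp
  then have "unopp (tweight (\<lambda>x y. Opp (c y x)) p)
      = prod_list (map (\<lambda>a. unopp (F (?n - 1 - 1 - a))) [0..<?n - 1])"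
    by (simp add: unopp_prod_list rev_map[symmetric] rev_upt)
  also have "\<dots> = tweight c (rev p)"
    unfolding tweight_def length_rev
  proof (intro arg_cong[where f = prod_list] map_cong refl)
    fix a assume "a \<in> set [0..<?n - 1]"
    then have a: "a < ?n - 1" by simp
    define b where "b = ?n - 2 - a"
    have "even a = even b"
      using even a unfolding b_def by (auto elim!: evenE)
    moreover have "rev p ! a = p ! (b + 1)" "rev p ! (a + 1) = p ! b"
      using a unfolding b_def by (simp_all add: rev_nth Suc_diff_Suc)
    moreover have "odd b \<Longrightarrow> runit (c (p ! b) (p ! (b + 1)))"
      using units a unfolding ball_odd_steps_iff b_def by simp
    moreover have "?n - 1 - 1 - a = b"
      unfolding b_def by simp
    ultimately show "unopp (F (?n - 1 - 1 - a)) = (if even a then c (rev p ! a) (rev p ! (a + 1))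
              else rinv (c (rev p ! (a + 1)) (rev p ! a)))"
      unfolding F_def by (simp add: rinv_Opp)
  qed
  finally show ?thesis by simp
qed

lemma sum_tpaths_between_rev_opp:
  assumes sym: "\<forall>(x, y)\<in>D. (y, x) \<in> D" and noncrossing: "\<forall>d\<in>D. \<forall>e\<in>D. \<not> crosses d e"
    and units: "\<forall>(r, s)\<in>D. runit (c r s)"
  shows "(\<Sum>p | tpath_between Q D i k p. tweight c p)
       = unopp (\<Sum>p | tpath_between Q D k i p. tweight (\<lambda>x y. Opp (c y x)) p)"
proof -
  have "tweight c (rev p) = unopp (tweight (\<lambda>x y. Opp (c y x)) p)"
    if "tpath_between Q D k i p" for p
  proof (rule tweight_rev)
    show "even (length p)"
      using tpath_between_even_length[OF that] .
    show "\<forall>e\<in>set (odd_steps p). runit (c (fst e) (snd e))"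
      using that units unfolding tpath_between_def by auto
  qed
  then have "(\<Sum>p | tpath_between Q D k i p. tweight c (rev p))
      = (\<Sum>p | tpath_between Q D k i p. unopp (tweight (\<lambda>x y. Opp (c y x)) p))"
    by simp
  then show ?thesis
    using sum_tpaths_between_rev[OF sym noncrossing, of "tweight c"] by (simp add: unopp_sum)
qed

lemma separating_diagonal_side2:
  assumes "dissection P {(t, v), (v, t)}" and D2: "dissection (side2 P t v) D2"
    and "{(t, v), (v, t)} \<inter> D2 = {}" and "D = {(t, v), (v, t)} \<union> D2"
    and i: "i \<in> side1 P t v - {t, v}" and k: "k \<in> side2 P t v - {t, v}"
  shows "separating_diagonal P (side2 P t v) D D2 t v i k"
proof
  have "(t, v) \<in> internal_diag P"
    using assms(1) unfolding dissection_def by auto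
  then show "side2 P t v \<subseteq> P"
    unfolding internal_diag_def diag_def side2_def by auto
  show "t \<in> side2 P t v" "v \<in> side2 P t v"
    unfolding side2_def by auto
  have i_side: "cyc3 t i v"
    using i unfolding side1_def by auto
  then show "i \<notin> side2 P t v"
    using cyc3_not_reverse unfolding side2_def by blast
  show "i \<in> P"
    using i unfolding side1_def by auto
  show "k \<in> side2 P t v" "k \<noteq> t" "k \<noteq> v"
    using k by auto
  show "D = {(t, v), (v, t)} \<union> D2" "(t, v) \<notin> D2" "(v, t) \<notin> D2"
    using assms(3,4) by auto
  show "D2 \<subseteq> side2 P t v \<times> side2 P t v"
    using D2 unfolding dissection_def internal_diag_def diag_def by auto
  show "crosses (t, v) (i, x)" if "x \<in> side2 P t v" "x \<noteq> t" "x \<noteq> v" for x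
    using that i_side crosses_across_diagonal unfolding side2_def by auto
qed

lemma sum_tpaths_from_side1:
  fixes c :: "'v::linorder \<Rightarrow> 'v \<Rightarrow> 'a::{ring, monoid_mult}"
  assumes "polygon P" "dissection P {(t, v), (v, t)}" "dissection (side2 P t v) D2"
    and "{(t, v), (v, t)} \<inter> D2 = {}" "D = {(t, v), (v, t)} \<union> D2" "\<forall>(r, s)\<in>D. runit (c r s)"
    and "i \<in> side1 P t v - {t, v}" "k \<in> side2 P t v - {t, v}"
  shows "(\<Sum>p\<in>tpaths P D i k. tweight c p)
       = c i t * rinv (c v t) * (\<Sum>q\<in>tpaths (side2 P t v) D2 v k. tweight c q)
       + c i v * rinv (c t v) * (\<Sum>q\<in>tpaths (side2 P t v) D2 t k. tweight c q)"
proof -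
  interpret separating_diagonal P "side2 P t v" D D2 t v i k
    using separating_diagonal_side2 assms(2-5,7,8) .
  have "finite P"
    using assms(1) unfolding polygon_def by simp
  moreover have "runit (c v t)" "runit (c t v)"
    using assms(5,6) by auto
  ultimately show ?thesis
    unfolding tpaths_eq by (rule sum_tpaths)
qed

lemma sum_tpaths_to_side1:
  fixes c :: "'v::linorder \<Rightarrow> 'v \<Rightarrow> 'a::{ring, monoid_mult}"
  assumes "polygon P" "dissection P {(t, v), (v, t)}" and D2: "dissection (side2 P t v) D2"
    and "{(t, v), (v, t)} \<inter> D2 = {}" "D = {(t, v), (v, t)} \<union> D2" "\<forall>(r, s)\<in>D. runit (c r s)"
    and "i \<in> side2 P t v - {t, v}" "k \<in> side1 P t v - {t, v}"
  shows "(\<Sum>p\<in>tpaths P D i k. tweight c p)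
       = (\<Sum>q\<in>tpaths (side2 P t v) D2 i t. tweight c q) * rinv (c v t) * c v k
       + (\<Sum>q\<in>tpaths (side2 P t v) D2 i v. tweight c q) * rinv (c t v) * c t k"
proof -
  let ?S = "side2 P t v" and ?c' = "\<lambda>x y. Opp (c y x)"
  interpret separating_diagonal P ?S D D2 t v k i
    using separating_diagonal_side2 assms(2-5,8,7) .
  have D2_sym: "\<forall>(x, y)\<in>D2. (y, x) \<in> D2" and D2_noncrossing: "\<forall>d\<in>D2. \<forall>e\<in>D2. \<not> crosses d e"
    using D2 unfolding dissection_def by auto
  note D_sym = D_symmetric[OF D2_sym] and D_nc = D_noncrossing[OF D2_noncrossing]
  have units: "\<forall>(r, s)\<in>D. runit (c r s)" "\<forall>(r, s)\<in>D2. runit (c r s)"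
    using assms(5,6) by auto
  have units': "runit (?c' v t)" "runit (?c' t v)"
    using units runit_Opp D_eq by auto
  have reversed_D2: "(\<Sum>q\<in>tpaths ?S D2 i x. tweight c q)
      = unopp (\<Sum>q | tpath_between ?S D2 x i q. tweight ?c' q)" for x
    unfolding tpaths_eq by (rule sum_tpaths_between_rev_opp[OF D2_sym D2_noncrossing units(2)])
  have "(\<Sum>p\<in>tpaths P D i k. tweight c p) = unopp (\<Sum>p | tpath_between P D k i p. tweight ?c' p)"
    unfolding tpaths_eq by (rule sum_tpaths_between_rev_opp[OF D_sym D_nc units(1)])
  also have "\<dots> = unopp (?c' k t * rinv (?c' v t) * (\<Sum>q | tpath_between ?S D2 v i q. tweight ?c' q)
      + ?c' k v * rinv (?c' t v) * (\<Sum>q | tpath_between ?S D2 t i q. tweight ?c' q))"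
    using sum_tpaths[of ?c'] units' assms(1) unfolding polygon_def by simp
  also have "\<dots> = (\<Sum>q\<in>tpaths ?S D2 i t. tweight c q) * rinv (c v t) * c v k
       + (\<Sum>q\<in>tpaths ?S D2 i v. tweight c q) * rinv (c t v) * c t k"
    using reversed_D2[of t] reversed_D2[of v] units D_eq by (simp add: rinv_Opp mult.assoc add.commute)
  finally show ?thesis .
qed

theorem lemma2p7:
  fixes P :: "'v::linorder set" and t v :: 'v
    and D D2 :: "('v \<times> 'v) set"
    and c :: "'v \<Rightarrow> 'v \<Rightarrow> 'a::{ring, monoid_mult}"
  assumes "polygon P"
    and "dissection P {(t, v), (v, t)}"
    and "dissection (side2 P t v) D2"
    and "{(t, v), (v, t)} \<inter> D2 = {}"
    and "D = {(t, v), (v, t)} \<union> D2"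
    and "\<forall>(r, s)\<in>D. runit (c r s)"
  shows "(\<forall>i\<in>side1 P t v - {t, v}. \<forall>k\<in>side2 P t v - {t, v}.
            (\<Sum>p\<in>tpaths P D i k. tweight c p)
          = c i t * rinv (c v t) * (\<Sum>q\<in>tpaths (side2 P t v) D2 v k. tweight c q)
            + c i v * rinv (c t v) * (\<Sum>q\<in>tpaths (side2 P t v) D2 t k. tweight c q))
       \<and> (\<forall>i\<in>side2 P t v - {t, v}. \<forall>k\<in>side1 P t v - {t, v}.
            (\<Sum>p\<in>tpaths P D i k. tweight c p)
          = (\<Sum>q\<in>tpaths (side2 P t v) D2 i t. tweight c q) * rinv (c v t) * c v k
            + (\<Sum>q\<in>tpaths (side2 P t v) D2 i v. tweight c q) * rinv (c t v) * c t k)"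
  using sum_tpaths_from_side1[OF assms] sum_tpaths_to_side1[OF assms] by blast

end
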